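(* Let $h=\sqrt{\mathsf{min}(\mathsf{min}+4\mathsf{max})}-3\mathsf{min}$. When the characteristic functions range over $V_2$, the AMC-$h$ policy has a competitive ratio of $\frac{\mathsf{min}+\sqrt{\mathsf{min}(\mathsf{min}+4\mathsf{max})}}{2\mathsf{max}}$ for maximizing social welfare with respect to greedy players.
   Context: Players: a finite set $N=\{a_1,\dots,a_n\}$. A characteristic function is $v:2^N\to\mathbb{R}_{\ge 0}$ with $v(\emptyset)=0$. There are fixed, known constants $0<\mathsf{min}\le\mathsf{max}$ and every $v$ considered is monotone and bounded: $\mathsf{min}\le v(S)\le v(T)\le\mathsf{max}$ for all nonempty $S\subseteq T\subseteq N$. $V_2$ denotes the set of such $v$ with $2\mathsf{min}\le\mathsf{max}<3\mathsf{min}$. A coalition structure is a partition $C$ of $N$; its social welfare is $\mathsf{SW}(C\mid v)=\sum_{S\in C}v(S)$. Online process: an arrival order is a permutation $\pi=(\pi_1,\dots,\pi_n)$ of $N$; player $\pi_t$ arrives at time $t$; $\pi_{\prec t}$ is the set of players arriving before time $t$ and $\pi^{-1}(i)$ is the arrival time of $i$. For $S\subseteq N$, $\pi_{|S}$ denotes the players of $S$ in the relative order of $\pi$. Let $C^{t-1}$ be the coalition structure of players arrived before time $t$ ($C^0=\emptyset$). At time $t$, player $\pi_t$ either joins an existing coalition $S\in C^{t-1}$ or forms $\{\pi_t\}$ (choice $S=\emptyset$); decisions are never revised. A distribution policy $\varphi$ assigns to each coalition $S$ (with order $\pi_{|S}$) a split $(\varphi_i(S,\pi_{|S}))_{i\in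 S}$ of $v(S)$. AMC-$h$ policy (threshold $h\ge0$): when player $i$ joins coalition $S$, let $\mathsf{MC}_i=v((\pi_{\prec\pi^{-1}(i)}\cap S)\cup\{i\})-v(\pi_{\prec\pi^{-1}(i)}\cap S)$. If $\mathsf{MC}_i\le h$, all of $\mathsf{MC}_i$ is added to the share of the last player of $S$ who arrived before $i$; if $\mathsf{MC}_i>h$, that previous player additionally receives $h$ and $i$ receives $\mathsf{MC}_i-h$; if $i$ is the first player of her coalition, the "previous player" is $i$ herself (so she receives $v(\{i\})$). Shares already assigned are never reduced. Greedy players: $\pi_t$ chooses $S^*\in\arg\max_{S\in C^{t-1}\cup\{\emptyset\}}\varphi_{\pi_t}(S\cup\{\pi_t\},\pi_{|S\cup\{\pi_t\}})$, i.e. her share immediately after joining (predetermined tie-breaking). $C_g(v,\pi\mid\varphi)$ is the final structure. The competitive ratio over a class is $\alpha=\inf_{v,\pi}\mathsf{SW}(C_g(v,\pi\mid\varphi))/\max_C\mathsf{SW}(C\mid v)$, over $v$ in the class and all arrival orders $\pi$. *)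

theory Defs
  imports Main "HOL-Library.Disjoint_Sets" Complex_Main
begin

text \<open>Players are natural numbers; the player set of an instance is N = set pi,
  where the arrival order pi is a duplicate-free list.\<close>

definition bounded_monotone :: "real \<Rightarrow> real \<Rightarrow> nat set \<Rightarrow> (nat set \<Rightarrow> real) \<Rightarrow> bool" where
  "bounded_monotone mn mx N v \<longleftrightarrow> v {} = 0 \<and>
     (\<forall>S T. S \<noteq> {} \<longrightarrow> S \<subseteq> T \<longrightarrow> T \<subseteq> N \<longrightarrow> mn \<le> v S \<and> v S \<le> v T \<and> v T \<le> mx)"

text \<open>Helper: the list argument holds the coalition members in REVERSE arrival order
  (most recent first).\<close>
fun amc_share_rev :: "(nat set \<Rightarrow> real) \<Rightarrow> real \<Rightarrow> nat list \<Rightarrow> nat \<Rightarrow> real" where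
  "amc_share_rev v h [] = (\<lambda>j. 0)"
| "amc_share_rev v h (i # rs) =
     (if rs = [] then (\<lambda>j. if j = i then v {i} else 0)
      else (let mc = v (set rs \<union> {i}) - v (set rs); p = hd rs; phi = amc_share_rev v h rs in
            if mc \<le> h then phi(p := phi p + mc)
            else phi(p := phi p + h, i := mc - h)))"

definition amc_share :: "(nat set \<Rightarrow> real) \<Rightarrow> real \<Rightarrow> nat list \<Rightarrow> nat \<Rightarrow> real" where
  "amc_share v h xs = amc_share_rev v h (rev xs)"

definition join_value :: "(nat set \<Rightarrow> real) \<Rightarrow> real \<Rightarrow> nat list \<Rightarrow> nat \<Rightarrow> real" where
  "join_value v h c i = amc_share v h (c @ [i]) i"

definition greedy_step :: "(nat set \<Rightarrow> real) \<Rightarrow> real \<Rightarrow> nat list list \<Rightarrow> nat \<Rightarrow> nat list list \<Rightarrow> bool" where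
  "greedy_step v h C i C' \<longleftrightarrow>
     (C' = C @ [[i]] \<and> (\<forall>c\<in>set C. join_value v h c i \<le> join_value v h [] i))
   \<or> (\<exists>k<length C. C' = C[k := C ! k @ [i]] \<and>
        join_value v h [] i \<le> join_value v h (C ! k) i \<and>
        (\<forall>c\<in>set C. join_value v h c i \<le> join_value v h (C ! k) i))"

inductive greedy_run :: "(nat set \<Rightarrow> real) \<Rightarrow> real \<Rightarrow> nat list \<Rightarrow> nat list list \<Rightarrow> bool" where
  "greedy_run v h [] []"
| "greedy_run v h ps C \<Longrightarrow> greedy_step v h C p C' \<Longrightarrow> greedy_run v h (ps @ [p]) C'"

definition SW :: "(nat set \<Rightarrow> real) \<Rightarrow> nat set set \<Rightarrow> real" where
  "SW v P = (\<Sum>S\<in>P. v S)"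

definition structure_of :: "nat list list \<Rightarrow> nat set set" where
  "structure_of C = set ` set C"

definition OPT :: "(nat set \<Rightarrow> real) \<Rightarrow> nat set \<Rightarrow> real" where
  "OPT v N = Max {SW v P | P. partition_on N P}"

definition amc_competitive_ratio :: "real \<Rightarrow> real \<Rightarrow> real \<Rightarrow> real" where
  "amc_competitive_ratio mn mx h = Inf {SW v (structure_of C) / OPT v (set pi) | v pi C.
      pi \<noteq> [] \<and> distinct pi \<and> bounded_monotone mn mx (set pi) v \<and> greedy_run v h pi C}"

end

(*
  With max < 3 min + 2h, a player who joins a two-player coalition {a, b} under AMC-h gets
  at most max - (v{a} + v{b} + h) - h < min, less than staying alone.  Hence greedy outcomes
  consist of singletons and pairs; a pair forms only if its surplus over the singleton values
  is at least h, and two singletons stay apart only if their surplus is at most h.  Charge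
  every player her singleton value plus an equal share of her coalition's surplus.  Then every
  coalition of an arbitrary partition is worth at most (2 min + h) / (2 min) times its charge,
  so OPT <= (2 min + h) / (2 min) * SW.  Two players with v{a, b} = 2 min + h, the second one
  indifferent between merging and staying alone, show this bound is attained; for
  h = sqrt (min (min + 4 max)) - 3 min, 2 min / (2 min + h) is the stated ratio.
*)
theory Submission
  imports Defs "HOL-Library.Multiset"
begin

lemma bounded_monotone_bounds:
  assumes "bounded_monotone mn mx N v" "S \<noteq> {}" "S \<subseteq> N"
  shows "mn \<le> v S" "v S \<le> mx"
  using assms unfolding bounded_monotone_def by blast+

lemma amc_share_rev_not_member: "j \<notin> set l \<Longrightarrow> amc_share_rev v h l j = 0"
proof (induction l)
  case (Cons i rs)
  then show ?case
    by (cases rs) (auto simp: Let_def)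
qed simp

lemma join_value_Nil: "join_value v h [] i = v {i}"
  by (simp add: join_value_def amc_share_def)

lemma join_value_nonempty:
  assumes "c \<noteq> []" "i \<notin> set c"
  shows "join_value v h c i = max 0 (v (insert i (set c)) - v (set c) - h)"
proof -
  have "hd (rev c) \<in> set c"
    using assms(1) by (metis hd_in_set rev_is_Nil_conv set_rev)
  then show ?thesis
    using assms by (auto simp: join_value_def amc_share_def Let_def amc_share_rev_not_member)
qed

lemma mset_concat_update_append:
  "k < length C \<Longrightarrow> mset (concat (C[k := C ! k @ [p]])) = mset (concat C) + {#p#}"
  by (subst (2) id_take_nth_drop[of k C]) (simp_all add: upd_conv_take_nth_drop)

lemma greedy_run_mset_concat: "greedy_run v h ps C \<Longrightarrow> mset (concat C) = mset ps"
  by (induction rule: greedy_run.induct) (auto simp: greedy_step_def mset_concat_update_append)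

lemma greedy_run_Nil_notin: "greedy_run v h ps C \<Longrightarrow> [] \<notin> set C"
  by (induction rule: greedy_run.induct)
    (auto simp: greedy_step_def dest: set_update_subset_insert[THEN subsetD])

lemma partition_on_structure_of:
  assumes "distinct (concat C)" "[] \<notin> set C"
  shows "partition_on (set (concat C)) (structure_of C)"
proof (rule partition_onI)
  show "\<Union> (structure_of C) = set (concat C)"
    by (simp add: structure_of_def)
  show "disjnt S T" if "S \<in> structure_of C" "T \<in> structure_of C" "S \<noteq> T" for S T
    using that assms(1) by (auto simp: structure_of_def distinct_concat_iff disjnt_def)
  show "{} \<notin> structure_of C"
    using assms(2) by (auto simp: structure_of_def)
qed

lemma greedy_run_partition_on:
  assumes "greedy_run v h ps C" "distinct ps"
  shows "partition_on (set ps) (structure_of C)"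
proof -
  have "mset (concat C) = mset ps"
    using assms(1) by (rule greedy_run_mset_concat)
  then have "distinct (concat C)" "set (concat C) = set ps"
    using assms(2) mset_eq_imp_distinct_iff mset_eq_setD by blast+
  then show ?thesis
    using partition_on_structure_of greedy_run_Nil_notin[OF assms(1)] by metis
qed

definition amc_stable_structure :: "(nat set \<Rightarrow> real) \<Rightarrow> real \<Rightarrow> nat set set \<Rightarrow> bool" where
  "amc_stable_structure v h Q \<longleftrightarrow>
     (\<forall>S\<in>Q. (\<exists>a. S = {a}) \<or> (\<exists>a b. a \<noteq> b \<and> S = {a, b} \<and> v {a} + v {b} + h \<le> v {a, b})) \<and>
     (\<forall>i j. {i} \<in> Q \<longrightarrow> {j} \<in> Q \<longrightarrow> i \<noteq> j \<longrightarrow> v {i, j} \<le> v {i} + v {j} + h)"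

lemma amc_stable_structure_insert_singleton:
  assumes "amc_stable_structure v h Q"
    and "\<And>i. {i} \<in> Q \<Longrightarrow> i \<noteq> p \<Longrightarrow> v {i, p} \<le> v {i} + v {p} + h"
  shows "amc_stable_structure v h (insert {p} Q)"
proof -
  have "v {p, i} \<le> v {p} + v {i} + h" if "{i} \<in> Q" "i \<noteq> p" for i
    using assms(2)[OF that] by (simp add: insert_commute)
  then show ?thesis
    using assms unfolding amc_stable_structure_def by auto
qed

lemma amc_stable_structure_subset_insert_pair:
  assumes "amc_stable_structure v h Q" "Q' \<subseteq> insert {a, b} Q"
    and "a \<noteq> b" "v {a} + v {b} + h \<le> v {a, b}"
  shows "amc_stable_structure v h Q'"
proof -
  have "{i} \<noteq> {a, b}" for i
    using \<open>a \<noteq> b\<close> by (metis insertI1 insert_commute singletonD)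
  then have "{i} \<in> Q" if "{i} \<in> Q'" for i
    using that assms(2) by blast
  moreover have "S \<in> Q \<or> S = {a, b}" if "S \<in> Q'" for S
    using that assms(2) by blast
  ultimately show ?thesis
    using assms(1,3,4) unfolding amc_stable_structure_def by metis
qed

lemma amc_stable_structure_stay_alone:
  assumes stable: "amc_stable_structure v h (structure_of C)"
    and stay: "\<forall>c\<in>set C. join_value v h c p \<le> join_value v h [] p"
    and fresh: "p \<notin> set (concat C)"
  shows "amc_stable_structure v h (structure_of (C @ [[p]]))"
proof -
  have "v {i, p} \<le> v {i} + v {p} + h" if i: "{i} \<in> structure_of C" for i
  proof -
    obtain c where c: "c \<in> set C" "set c = {i}"
      using i unfolding structure_of_def by blast
    then have "join_value v h c p = max 0 (v {i, p} - v {i} - h)"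
      using fresh by (subst join_value_nonempty) (auto simp: insert_commute)
    moreover have "join_value v h c p \<le> v {p}"
      using stay c(1) by (simp add: join_value_Nil)
    ultimately show ?thesis
      by simp
  qed
  then show ?thesis
    using stable by (auto simp: structure_of_def intro!: amc_stable_structure_insert_singleton)
qed

lemma amc_stable_structure_join:
  assumes stable: "amc_stable_structure v h (structure_of C)"
    and k: "k < length C" and join: "v {p} \<le> join_value v h (C ! k) p"
    and fresh: "p \<notin> set (concat C)"
    and bm: "bounded_monotone mn mx N v" and N: "insert p (set (concat C)) \<subseteq> N"
    and mn: "0 < mn" and mx: "mx < 3 * mn + 2 * h"
  shows "amc_stable_structure v h (structure_of (C[k := C ! k @ [p]]))"
proof -
  note v_bounds = bounded_monotone_bounds[OF bm]
  have ck: "C ! k \<in> set C"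
    using k by simp
  then have share: "v {p} \<le> max 0 (v (insert p (set (C ! k))) - v (set (C ! k)) - h)"
    if "set (C ! k) \<noteq> {}"
    using join fresh that by (subst (asm) join_value_nonempty) auto
  have "0 < v {p}"
    using v_bounds(1)[of "{p}"] N mn by auto
  have "set (C ! k) \<in> structure_of C"
    using ck by (simp add: structure_of_def)
  then have "(\<exists>a. set (C ! k) = {a}) \<or>
      (\<exists>a b. a \<noteq> b \<and> set (C ! k) = {a, b} \<and> v {a} + v {b} + h \<le> v {a, b})"
    using stable unfolding amc_stable_structure_def by simp
  then consider a where "set (C ! k) = {a}"
    | a b where "set (C ! k) = {a, b}" "a \<noteq> b" "v {a} + v {b} + h \<le> v {a, b}"
    by blast
  then show ?thesis
  proof cases
    case (1 a)
    then have gain: "v {a} + v {p} + h \<le> v {a, p}"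
      using share \<open>0 < v {p}\<close> by (simp add: insert_commute)
    have "a \<noteq> p"
      using fresh ck 1 by auto
    moreover have "structure_of (C[k := C ! k @ [p]]) \<subseteq> insert (set (C ! k @ [p])) (structure_of C)"
      unfolding structure_of_def using set_update_subset_insert[of C k] by blast
    moreover have "set (C ! k @ [p]) = {a, p}"
      using 1 by auto
    ultimately show ?thesis
      using amc_stable_structure_subset_insert_pair[OF stable _ _ gain] by simp
  next
    case (2 a b)
    then have "v {p} \<le> max 0 (v {a, b, p} - v {a, b} - h)"
      using share by (simp add: insert_commute)
    moreover have "{a, b, p} \<subseteq> N"
      using N ck 2(1) by auto
    then have "v {a, b, p} \<le> mx" "mn \<le> v {a}" "mn \<le> v {b}" "mn \<le> v {p}"
      using v_bounds by auto
    ultimately show ?thesis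
      using \<open>0 < v {p}\<close> mx 2(3) by linarith
  qed
qed

lemma greedy_step_amc_stable_structure:
  assumes step: "greedy_step v h C p C'"
    and stable: "amc_stable_structure v h (structure_of C)"
    and fresh: "p \<notin> set (concat C)"
    and bm: "bounded_monotone mn mx N v" and N: "insert p (set (concat C)) \<subseteq> N"
    and mn: "0 < mn" and mx: "mx < 3 * mn + 2 * h"
  shows "amc_stable_structure v h (structure_of C')"
  using step unfolding greedy_step_def
proof (elim disjE exE conjE)
  assume "C' = C @ [[p]]" "\<forall>c\<in>set C. join_value v h c p \<le> join_value v h [] p"
  then show ?thesis
    using amc_stable_structure_stay_alone[OF stable _ fresh] by simp
next
  fix k assume "k < length C" "C' = C[k := C ! k @ [p]]"
    "join_value v h [] p \<le> join_value v h (C ! k) p"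
  then show ?thesis
    using amc_stable_structure_join[OF stable _ _ fresh bm N mn mx] by (simp add: join_value_Nil)
qed

lemma greedy_run_amc_stable_structure:
  assumes "greedy_run v h ps C" "distinct ps" "bounded_monotone mn mx N v" "set ps \<subseteq> N"
    "0 < mn" "mx < 3 * mn + 2 * h"
  shows "amc_stable_structure v h (structure_of C)"
  using assms
proof (induction rule: greedy_run.induct)
  case (1 v h)
  show ?case
    by (simp add: amc_stable_structure_def structure_of_def)
next
  case (2 v h ps C p C')
  have concat_C: "set (concat C) = set ps"
    using greedy_run_mset_concat[OF 2(1)] by (metis set_mset_mset)
  have "distinct ps" "set ps \<subseteq> N"
    using 2(4,6) by auto
  then have stable: "amc_stable_structure v h (structure_of C)"
    using 2(3,5,7,8) by blast
  have fresh: "p \<notin> set (concat C)" and N: "insert p (set (concat C)) \<subseteq> N"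
    using 2(4,6) concat_C by auto
  show ?case
    by (rule greedy_step_amc_stable_structure[OF 2(2) stable fresh 2(5) N 2(7,8)])
qed

lemma finite_partition_welfares: "finite N \<Longrightarrow> finite {SW v P | P. partition_on N P}"
  using finitely_many_partition_on[of N] by (simp add: setcompr_eq_image)

lemma SW_le_OPT: "finite N \<Longrightarrow> partition_on N P \<Longrightarrow> SW v P \<le> OPT v N"
  unfolding OPT_def by (rule Max_ge) (auto simp: finite_partition_welfares)

lemma OPT_le:
  assumes "finite N" "N \<noteq> {}" "\<And>P. partition_on N P \<Longrightarrow> SW v P \<le> B"
  shows "OPT v N \<le> B"
  unfolding OPT_def using assms partition_on_space[OF assms(2)]
  by (subst Max_le_iff) (auto simp: finite_partition_welfares)

lemma min_le_OPT:
  assumes "finite N" "N \<noteq> {}" "bounded_monotone mn mx N v"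
  shows "mn \<le> OPT v N"
proof -
  have "mn \<le> v N"
    using bounded_monotone_bounds(1)[OF assms(3,2) order_refl] .
  also have "\<dots> = SW v {N}"
    by (simp add: SW_def)
  also have "\<dots> \<le> OPT v N"
    using assms(1) partition_on_space[OF assms(2)] by (rule SW_le_OPT)
  finally show ?thesis .
qed

lemma SW_le_by_charging:
  assumes "finite N" "partition_on N P" "partition_on N Q"
    and "\<And>T. T \<in> P \<Longrightarrow> v T \<le> \<beta> * sum w T"
    and "\<And>S. S \<in> Q \<Longrightarrow> sum w S = v S"
  shows "SW v P \<le> \<beta> * SW v Q"
proof -
  have "SW v P \<le> (\<Sum>T\<in>P. \<beta> * sum w T)"
    unfolding SW_def using assms(4) by (rule sum_mono)
  also have "\<dots> = \<beta> * sum w N"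
    by (simp add: sum.partition[OF assms(1,2)] sum_distrib_left)
  also have "sum w N = SW v Q"
    unfolding SW_def using assms(5) by (simp add: sum.partition[OF assms(1,3)])
  finally show ?thesis .
qed

definition block_of :: "'a set set \<Rightarrow> 'a \<Rightarrow> 'a set" where
  "block_of Q i = (THE S. S \<in> Q \<and> i \<in> S)"

lemma block_of_eq: "partition_on N Q \<Longrightarrow> S \<in> Q \<Longrightarrow> i \<in> S \<Longrightarrow> block_of Q i = S"
  unfolding block_of_def
  by (rule the_equality) (auto simp: partition_on_def dest: disjointD)

definition surplus_share :: "(nat set \<Rightarrow> real) \<Rightarrow> nat set set \<Rightarrow> nat \<Rightarrow> real" where
  "surplus_share v Q i =
     v {i} + (v (block_of Q i) - (\<Sum>j\<in>block_of Q i. v {j})) / card (block_of Q i)"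

lemma sum_surplus_share:
  assumes "partition_on N Q" "S \<in> Q" "finite S"
  shows "(\<Sum>i\<in>S. surplus_share v Q i) = v S"
proof -
  have "S \<noteq> {}"
    using assms(1,2) by (auto simp: partition_on_def)
  then show ?thesis
    using block_of_eq[OF assms(1,2)] assms(3) by (simp add: surplus_share_def sum.distrib)
qed

lemma surplus_share_singleton: "partition_on N Q \<Longrightarrow> {i} \<in> Q \<Longrightarrow> surplus_share v Q i = v {i}"
  by (simp add: surplus_share_def block_of_eq)

lemma surplus_share_not_singleton:
  assumes Q: "partition_on N Q" and stable: "amc_stable_structure v h Q"
    and i: "i \<in> N" "{i} \<notin> Q"
  shows "v {i} + h / 2 \<le> surplus_share v Q i"
proof -
  obtain S where S: "S \<in> Q" "i \<in> S"
    using Q i(1) by (auto simp: partition_on_def)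
  then have "(\<exists>a. S = {a}) \<or> (\<exists>a b. a \<noteq> b \<and> S = {a, b} \<and> v {a} + v {b} + h \<le> v {a, b})"
    using stable unfolding amc_stable_structure_def by simp
  then obtain a b where ab: "a \<noteq> b" "S = {a, b}" "v {a} + v {b} + h \<le> v {a, b}"
    using S i(2) by blast
  then have "surplus_share v Q i = v {i} + (v {a, b} - v {a} - v {b}) / 2"
    using block_of_eq[OF Q S] by (simp add: surplus_share_def)
  then show ?thesis
    using ab(3) by simp
qed

lemma singleton_value_le_surplus_share:
  assumes "partition_on N Q" "amc_stable_structure v h Q" "i \<in> N" "0 \<le> h"
  shows "v {i} \<le> surplus_share v Q i"
  using assms surplus_share_singleton[OF assms(1)] surplus_share_not_singleton[OF assms(1-3)]
  by (cases "{i} \<in> Q") auto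

lemma charge_factor_bounds:
  fixes mn mx h :: real
  assumes "0 < mn" "0 \<le> h" "h \<le> 2 * mn" "4 * mn * mx \<le> (2 * mn + h) * (4 * mn + h)"
  defines "\<beta> \<equiv> (2 * mn + h) / (2 * mn)"
  shows "1 \<le> \<beta>" "\<And>x. 2 * mn \<le> x \<Longrightarrow> x + h \<le> \<beta> * x"
    "mx \<le> \<beta> * (2 * mn + h / 2)" "mx \<le> \<beta> * (3 * mn)"
proof -
  show "1 \<le> \<beta>"
    using assms(1,2) by (simp add: \<beta>_def)
  show "x + h \<le> \<beta> * x" if "2 * mn \<le> x" for x
  proof -
    have "\<beta> * x = x + h * x / (2 * mn)"
      using assms(1) by (simp add: \<beta>_def field_simps)
    moreover have "h * (2 * mn) \<le> h * x"
      using that assms(2) by (rule mult_left_mono)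
    ultimately show ?thesis
      using assms(1) by (simp add: pos_le_divide_eq)
  qed
  have "\<beta> * (2 * mn + h / 2) = (2 * mn + h) * (4 * mn + h) / (4 * mn)"
    using assms(1) by (simp add: \<beta>_def field_simps)
  then show "mx \<le> \<beta> * (2 * mn + h / 2)"
    using assms(1,4) by (simp add: pos_le_divide_eq mult.commute)
  moreover have "\<beta> * (2 * mn + h / 2) \<le> \<beta> * (3 * mn)"
    using \<open>1 \<le> \<beta>\<close> assms(3) by (intro mult_left_mono) auto
  ultimately show "mx \<le> \<beta> * (3 * mn)"
    by linarith
qed

lemma pair_value_le_surplus_charge:
  assumes Q: "partition_on N Q" and stable: "amc_stable_structure v h Q"
    and bm: "bounded_monotone mn mx N v"
    and mn: "0 < mn" and h: "0 \<le> h" "h \<le> 2 * mn"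
    and mx: "4 * mn * mx \<le> (2 * mn + h) * (4 * mn + h)"
    and ij: "i \<noteq> j" "i \<in> N" "j \<in> N"
  shows "v {i, j} \<le> (2 * mn + h) / (2 * mn) * (surplus_share v Q i + surplus_share v Q j)"
proof -
  define \<beta> where "\<beta> = (2 * mn + h) / (2 * mn)"
  define w where "w = surplus_share v Q"
  note \<beta> = charge_factor_bounds[OF mn h mx, folded \<beta>_def]
  note v_bounds = bounded_monotone_bounds[OF bm]
  have w_ge: "mn \<le> w i" "mn \<le> w j"
    using singleton_value_le_surplus_share[OF Q stable _ h(1)] v_bounds(1)[of "{i}"] v_bounds(1)[of "{j}"] ij
    unfolding w_def by force+
  consider "{i, j} \<in> Q" | "{i} \<in> Q" "{j} \<in> Q" | "{i} \<notin> Q \<or> {j} \<notin> Q"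
    by blast
  then have "v {i, j} \<le> \<beta> * (w i + w j)"
  proof cases
    case 1
    then have "w i + w j = v {i, j}"
      using sum_surplus_share[OF Q 1] ij(1) by (simp add: w_def)
    then show ?thesis
      using v_bounds(1)[of "{i, j}"] ij mn \<beta>(1) by (simp add: mult_le_cancel_right1)
  next
    case 2
    have "v {i, j} \<le> v {i} + v {j} + h"
      using stable 2 ij(1) unfolding amc_stable_structure_def by blast
    also have "\<dots> \<le> \<beta> * (v {i} + v {j})"
      using \<beta>(2) v_bounds(1)[of "{i}"] v_bounds(1)[of "{j}"] ij by (simp add: add_mono)
    also have "\<dots> = \<beta> * (w i + w j)"
      using surplus_share_singleton[OF Q] 2 by (simp add: w_def)
    finally show ?thesis .
  next
    case 3
    then have "2 * mn + h / 2 \<le> w i + w j"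
      using surplus_share_not_singleton[OF Q stable] v_bounds(1)[of "{i}"] v_bounds(1)[of "{j}"] w_ge ij
      unfolding w_def by fastforce
    then have "\<beta> * (2 * mn + h / 2) \<le> \<beta> * (w i + w j)"
      using \<beta>(1) by (intro mult_left_mono) auto
    then show ?thesis
      using \<beta>(3) v_bounds(2)[of "{i, j}"] ij by simp
  qed
  then show ?thesis
    by (simp add: \<beta>_def w_def)
qed

lemma value_le_surplus_charge:
  assumes Q: "partition_on N Q" and stable: "amc_stable_structure v h Q"
    and bm: "bounded_monotone mn mx N v"
    and mn: "0 < mn" and h: "0 \<le> h" "h \<le> 2 * mn"
    and mx: "4 * mn * mx \<le> (2 * mn + h) * (4 * mn + h)"
    and T: "finite T" "T \<noteq> {}" "T \<subseteq> N"
  shows "v T \<le> (2 * mn + h) / (2 * mn) * (\<Sum>i\<in>T. surplus_share v Q i)"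
proof -
  define \<beta> where "\<beta> = (2 * mn + h) / (2 * mn)"
  define w where "w = surplus_share v Q"
  note \<beta> = charge_factor_bounds[OF mn h mx, folded \<beta>_def]
  note v_bounds = bounded_monotone_bounds[OF bm]
  have w_ge: "v {i} \<le> w i" "mn \<le> w i" if "i \<in> N" for i
    using singleton_value_le_surplus_share[OF Q stable that h(1)] v_bounds(1)[of "{i}"] that
    unfolding w_def by auto
  have "card T \<noteq> 0"
    using T(1,2) by simp
  then have "card T = 1 \<or> card T = 2 \<or> 3 \<le> card T"
    by linarith
  then consider (one) i where "T = {i}" | (two) i j where "i \<noteq> j" "T = {i, j}" | (many) "3 \<le> card T"
    by (auto simp: card_1_singleton_iff card_2_iff)
  then have "v T \<le> \<beta> * sum w T"
  proof cases
    case (one i)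
    then have "v T \<le> w i" "w i \<le> \<beta> * w i"
      using w_ge[of i] T(3) mn \<beta>(1) by (auto simp: mult_le_cancel_right1)
    then show ?thesis
      using one by simp
  next
    case (two i j)
    then show ?thesis
      using pair_value_le_surplus_charge[OF Q stable bm mn h mx, of i j] T(3) by (simp add: \<beta>_def w_def)
  next
    case many
    then have "3 * mn \<le> real (card T) * mn"
      using mn by (intro mult_right_mono) auto
    also have "\<dots> \<le> sum w T"
      using w_ge(2) T(3) by (intro sum_bounded_below) auto
    finally have "\<beta> * (3 * mn) \<le> \<beta> * sum w T"
      using \<beta>(1) by (intro mult_left_mono) auto
    then show ?thesis
      using \<beta>(4) v_bounds(2)[OF T(2,3)] by linarith
  qed
  then show ?thesis
    by (simp add: \<beta>_def w_def)
qed

lemma OPT_le_greedy_welfare: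
  assumes run: "greedy_run v h ps C" and ps: "distinct ps" "ps \<noteq> []"
    and bm: "bounded_monotone mn mx (set ps) v"
    and mn: "0 < mn" and h: "0 \<le> h" "h \<le> 2 * mn"
    and mx: "mx < 3 * mn + 2 * h" "4 * mn * mx \<le> (2 * mn + h) * (4 * mn + h)"
  shows "OPT v (set ps) \<le> (2 * mn + h) / (2 * mn) * SW v (structure_of C)"
proof (rule OPT_le)
  have Q: "partition_on (set ps) (structure_of C)"
    using run ps(1) by (rule greedy_run_partition_on)
  have stable: "amc_stable_structure v h (structure_of C)"
    using run ps(1) bm order_refl mn mx(1) by (rule greedy_run_amc_stable_structure)
  fix P assume P: "partition_on (set ps) P"
  show "SW v P \<le> (2 * mn + h) / (2 * mn) * SW v (structure_of C)"
  proof (rule SW_le_by_charging[OF _ P Q])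
    show "v T \<le> (2 * mn + h) / (2 * mn) * sum (surplus_share v (structure_of C)) T" if "T \<in> P" for T
      using P that by (intro value_le_surplus_charge[OF Q stable bm mn h mx(2)])
        (auto simp: partition_on_def intro: finite_subset)
    show "sum (surplus_share v (structure_of C)) S = v S" if "S \<in> structure_of C" for S
      using that by (intro sum_surplus_share[OF Q]) (auto simp: structure_of_def)
  qed simp
qed (use ps in auto)

(* Player 1 gets v {0, 1} - v {0} - h = mn = v {1} by joining player 0: a tie, which
   greedy_step may break against merging. *)
lemma amc_tie_instance:
  fixes mn mx h :: real
  assumes mn: "0 < mn" and h: "0 \<le> h" and mx: "2 * mn + h \<le> mx"
  shows "\<exists>v C. bounded_monotone mn mx (set [0, 1]) v \<and> greedy_run v h [0, 1] C \<and>
    SW v (structure_of C) / OPT v (set [0, 1]) \<le> 2 * mn / (2 * mn + h)"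
proof (intro exI conjI)
  define v where "v S = (if S = {} then 0 else if S = {0, 1} then 2 * mn + h else mn)" for S :: "nat set"
  have v_lower: "mn \<le> v S" if "S \<noteq> {}" for S
    using that mn h by (simp add: v_def)
  have v_upper: "v S \<le> mx" for S
    using mn h mx by (simp add: v_def)
  have "v S \<le> v T" if "S \<noteq> {}" "S \<subseteq> T" "T \<subseteq> {0, 1}" for S T
  proof (cases "S = {0, 1}")
    case True
    then have "T = S"
      using that(2,3) by (rule_tac subset_antisym) simp_all
    then show ?thesis
      by simp
  next
    case False
    have "T \<noteq> {}"
      using that(1,2) by blast
    then show ?thesis
      using False that(1) v_lower[of T] by (simp add: v_def)
  qed
  then show "bounded_monotone mn mx (set [0, 1]) v"
    unfolding bounded_monotone_def using v_lower v_upper by (simp add: v_def)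
  have "join_value v h [0] 1 = mn"
    using mn by (simp add: join_value_nonempty v_def insert_commute)
  then have "greedy_step v h [[0]] 1 [[0], [1]]"
    by (simp add: greedy_step_def join_value_Nil v_def)
  moreover have "greedy_run v h [0] [[0]]"
    using greedy_run.intros(2)[OF greedy_run.intros(1), of v h 0 "[[0]]"]
    by (simp add: greedy_step_def)
  ultimately show "greedy_run v h [0, 1] [[0], [1]]"
    using greedy_run.intros(2)[of v h "[0]" "[[0]]" 1 "[[0], [1]]"] by simp
  have "2 * mn + h = SW v {{0, 1}}"
    by (simp add: SW_def v_def)
  also have "\<dots> \<le> OPT v (set [0, 1])"
    by (rule SW_le_OPT) (auto intro: partition_on_space)
  finally have OPT: "2 * mn + h \<le> OPT v (set [0, 1])" .
  have "SW v (structure_of [[0], [1]]) = 2 * mn"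
    by (simp add: SW_def structure_of_def v_def)
  moreover have "2 * mn / OPT v (set [0, 1]) \<le> 2 * mn / (2 * mn + h)"
    using OPT mn h by (intro divide_left_mono) simp_all
  ultimately show "SW v (structure_of [[0], [1]]) / OPT v (set [0, 1]) \<le> 2 * mn / (2 * mn + h)"
    by simp
qed

theorem amc_competitive_ratio_eq:
  fixes mn mx h :: real
  assumes mn: "0 < mn" and h: "0 \<le> h" "h \<le> 2 * mn"
    and mx: "2 * mn + h \<le> mx" "mx < 3 * mn + 2 * h" "4 * mn * mx \<le> (2 * mn + h) * (4 * mn + h)"
  shows "amc_competitive_ratio mn mx h = 2 * mn / (2 * mn + h)"
proof -
  define R where "R = {SW v (structure_of C) / OPT v (set pi) | v pi C.
    pi \<noteq> [] \<and> distinct pi \<and> bounded_monotone mn mx (set pi) v \<and> greedy_run v h pi C}"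
  have lower: "2 * mn / (2 * mn + h) \<le> r" if r: "r \<in> R" for r
  proof -
    obtain v pi C where r: "r = SW v (structure_of C) / OPT v (set pi)" and pi: "pi \<noteq> []" "distinct pi"
      and bm: "bounded_monotone mn mx (set pi) v" and run: "greedy_run v h pi C"
      using r unfolding R_def by blast
    have "OPT v (set pi) \<le> (2 * mn + h) / (2 * mn) * SW v (structure_of C)"
      by (rule OPT_le_greedy_welfare[OF run pi(2,1) bm mn h mx(2,3)])
    then have "2 * mn / (2 * mn + h) * OPT v (set pi) \<le> SW v (structure_of C)"
      using mn h by (simp add: field_simps)
    moreover have "0 < OPT v (set pi)"
      using min_le_OPT[OF _ _ bm] pi(1) mn by fastforce
    ultimately show ?thesis
      unfolding r by (simp add: pos_le_divide_eq)
  qed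
  obtain v C where bm: "bounded_monotone mn mx (set [0, 1]) v" and run: "greedy_run v h [0, 1] C"
    and tie: "SW v (structure_of C) / OPT v (set [0, 1]) \<le> 2 * mn / (2 * mn + h)"
    using amc_tie_instance[OF mn h(1) mx(1)] by blast
  have "SW v (structure_of C) / OPT v (set [0, 1]) \<in> R"
    unfolding R_def using bm run by fastforce
  then have "Inf R = 2 * mn / (2 * mn + h)"
    using lower tie by (intro cInf_eq_non_empty) (auto intro: order_trans)
  then show ?thesis
    by (simp add: amc_competitive_ratio_def R_def)
qed

lemma sqrt_threshold_bounds:
  fixes mn mx :: real
  assumes mn: "0 < mn" and mx: "2 * mn \<le> mx" "mx \<le> 6 * mn"
  defines "s \<equiv> sqrt (mn * (mn + 4 * mx))"
  shows "3 * mn \<le> s" "s \<le> 5 * mn" "s \<le> mx + mn" "(s - mn) * (s + mn) = 4 * mn * mx"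
proof -
  have "mn * (2 * mn) \<le> mn * mx" "mn * mx \<le> mn * (6 * mn)" "mx * (2 * mn) \<le> mx * mx"
    using mn mx by (intro mult_left_mono; simp)+
  then have "(3 * mn)\<^sup>2 \<le> mn * (mn + 4 * mx)" "mn * (mn + 4 * mx) \<le> (5 * mn)\<^sup>2"
    "mn * (mn + 4 * mx) \<le> (mx + mn)\<^sup>2"
    by (simp_all add: power2_eq_square algebra_simps)
  then show "3 * mn \<le> s" "s \<le> 5 * mn" "s \<le> mx + mn"
    unfolding s_def using mn mx by (auto intro: real_le_rsqrt real_le_lsqrt)
  have "s\<^sup>2 = mn * (mn + 4 * mx)"
    unfolding s_def using mn mx by simp
  then show "(s - mn) * (s + mn) = 4 * mn * mx"
    by (simp add: power2_eq_square algebra_simps)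
qed

theorem theorem5:
  fixes mn mx :: real
  assumes "0 < mn" and "2 * mn \<le> mx" and "mx < 3 * mn"
  shows "amc_competitive_ratio mn mx (sqrt (mn * (mn + 4 * mx)) - 3 * mn)
           = (mn + sqrt (mn * (mn + 4 * mx))) / (2 * mx)"
proof -
  define s where "s = sqrt (mn * (mn + 4 * mx))"
  have s: "3 * mn \<le> s" "s \<le> 5 * mn" "s \<le> mx + mn" "(s - mn) * (s + mn) = 4 * mn * mx"
    using sqrt_threshold_bounds[of mn mx] assms unfolding s_def by auto
  have "amc_competitive_ratio mn mx (s - 3 * mn) = 2 * mn / (s - mn)"
    using amc_competitive_ratio_eq[of mn "s - 3 * mn" mx] assms s by (simp add: algebra_simps)
  also have "\<dots> = (mn + s) / (2 * mx)"
    using assms s by (simp add: field_simps)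
  finally show ?thesis
    unfolding s_def .
qed

end
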